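(* Let $\Gamma$ be a subset of $M_{n\times n}(\mathbb{C})$ such that for any $A,B\in\Gamma$ there exists a polynomial $p(x)=\sum_{i=0}^{k}A_i x^i$ with matrix coefficients $A_i\in M_{n\times n}(\mathbb{C})$, considered on $[0,1]$, such that $p(0)=A$, $p(1)=B$ and $p([0,1])\subset\Gamma$. Let $\Gamma_s$ be the set of all matrices in $\Gamma$ that are nonsingular and have $n$ distinct eigenvalues. Then $\Gamma_s$ is dense in $\Gamma$ if and only if the closure $\overline{\Gamma}$ contains a nonsingular matrix with $n$ distinct eigenvalues.
   Context: $M_{n\times n}(\mathbb{C})$ denotes the set of $n\times n$ complex matrices, equipped with the topology induced by the Frobenius norm. *)

theory Defs
  imports "HOL-Analysis.Analysis"
begin

text \<open>n x n complex matrices are represented as complex^'n^'n; the norm on this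
type is the Euclidean norm of all entries, i.e. the Frobenius norm.\<close>

definition mat_eigenvalues :: "complex^'n^'n \<Rightarrow> complex set" where
  "mat_eigenvalues A = {c. \<exists>v. v \<noteq> 0 \<and> A *v v = c *s v}"

definition has_n_distinct_eigenvalues :: "complex^'n^'n \<Rightarrow> bool" where
  "has_n_distinct_eigenvalues A \<longleftrightarrow> card (mat_eigenvalues A) = CARD('n)"

definition matpoly :: "(nat \<Rightarrow> complex^'n^'n) \<Rightarrow> nat \<Rightarrow> real \<Rightarrow> complex^'n^'n" where
  "matpoly C k t = (\<Sum>i\<le>k. (t ^ i) *\<^sub>R C i)"

end

theory Submission
  imports Defs "HOL-Computational_Algebra.Fundamental_Theorem_Algebra"
begin

text \<open>Let \<open>\<chi>\<^sub>A\<close> be the characteristic polynomial of \<open>A\<close>. The matrix \<open>A\<close> has \<open>n\<close> distinct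
  eigenvalues iff \<open>\<chi>\<^sub>A\<close> and \<open>\<chi>\<^sub>A'\<close> have no common root, and by the spectral mapping property this
  happens iff \<open>\<chi>\<^sub>A'(A)\<close> is nonsingular. Hence \<open>A\<close> is good (nonsingular with \<open>n\<close> distinct
  eigenvalues) iff \<open>D(A) = det A \<cdot> det \<chi>\<^sub>A'(A) \<noteq> 0\<close>, and \<open>D\<close> is a polynomial in the entries of
  \<open>A\<close>. By continuity of \<open>D\<close>, a good matrix in the closure of \<open>\<Gamma>\<close> yields a good \<open>A\<^sub>0 \<in> \<Gamma>\<close>. For
  any \<open>A \<in> \<Gamma>\<close>, along a polynomial path \<open>p\<close> in \<open>\<Gamma>\<close> from \<open>A\<close> to \<open>A\<^sub>0\<close> the function \<open>D(p(t))\<close> is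
  a polynomial in \<open>t\<close> that does not vanish at \<open>t = 1\<close>; so it has finitely many zeros, \<open>p(t)\<close> is
  good for all small \<open>t > 0\<close>, and \<open>A = p(0)\<close> is a limit of good matrices of \<open>\<Gamma>\<close>.\<close>

section \<open>Polynomial functions in a set of generators\<close>

inductive polynomial_in :: "('a \<Rightarrow> 'b::comm_ring_1) set \<Rightarrow> ('a \<Rightarrow> 'b) \<Rightarrow> bool" for B where
  generator: "b \<in> B \<Longrightarrow> polynomial_in B b"
| const: "polynomial_in B (\<lambda>x. c)"
| add: "polynomial_in B f \<Longrightarrow> polynomial_in B g \<Longrightarrow> polynomial_in B (\<lambda>x. f x + g x)"
| mult: "polynomial_in B f \<Longrightarrow> polynomial_in B g \<Longrightarrow> polynomial_in B (\<lambda>x. f x * g x)"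

lemma polynomial_in_diff:
  assumes "polynomial_in B f" "polynomial_in B g"
  shows "polynomial_in B (\<lambda>x. f x - g x)"
proof -
  have "polynomial_in B (\<lambda>x. f x + (- 1) * g x)"
    using assms by (intro polynomial_in.add polynomial_in.mult polynomial_in.const)
  then show ?thesis by simp
qed

lemma polynomial_in_sum:
  "finite S \<Longrightarrow> (\<And>i. i \<in> S \<Longrightarrow> polynomial_in B (f i)) \<Longrightarrow> polynomial_in B (\<lambda>x. \<Sum>i\<in>S. f i x)"
  by (induction S rule: finite_induct) (auto intro: polynomial_in.intros)

lemma polynomial_in_prod:
  "finite S \<Longrightarrow> (\<And>i. i \<in> S \<Longrightarrow> polynomial_in B (f i)) \<Longrightarrow> polynomial_in B (\<lambda>x. \<Prod>i\<in>S. f i x)"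
  by (induction S rule: finite_induct) (auto intro: polynomial_in.intros)

lemma polynomial_in_power: "polynomial_in B f \<Longrightarrow> polynomial_in B (\<lambda>x. f x ^ k)"
  by (induction k) (auto intro: polynomial_in.intros)

lemma polynomial_in_compose:
  assumes "polynomial_in B f" "\<And>b. b \<in> B \<Longrightarrow> polynomial_in B' (\<lambda>y. b (g y))"
  shows "polynomial_in B' (\<lambda>y. f (g y))"
  using assms by induction (auto intro: polynomial_in.intros)

lemma continuous_on_polynomial_in:
  fixes B :: "('a::topological_space \<Rightarrow> 'b::{comm_ring_1, real_normed_algebra}) set"
  assumes "polynomial_in B f" "\<And>b. b \<in> B \<Longrightarrow> continuous_on S b"
  shows "continuous_on S f"
  using assms by induction (auto intro: continuous_intros)

lemma polynomial_in_singleton_eq_poly: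
  assumes "polynomial_in {g} f"
  shows "\<exists>q. \<forall>x. f x = poly q (g x)"
  using assms
proof induction
  case (generator b)
  then show ?case by (intro exI[of _ "[:0, 1:]"]) simp
next
  case (const c)
  show ?case by (intro exI[of _ "[:c:]"]) simp
next
  case (add f h)
  then obtain p q where "\<forall>x. f x = poly p (g x)" "\<forall>x. h x = poly q (g x)" by blast
  then show ?case by (intro exI[of _ "p + q"]) simp
next
  case (mult f h)
  then obtain p q where "\<forall>x. f x = poly p (g x)" "\<forall>x. h x = poly q (g x)" by blast
  then show ?case by (intro exI[of _ "p * q"]) simp
qed

lemma finite_zeros_polynomial_in_singleton:
  fixes g :: "'a \<Rightarrow> 'b::idom"
  assumes "polynomial_in {g} f" "inj g" "f x\<^sub>0 \<noteq> 0"
  shows "finite {x. f x = 0}"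
proof -
  obtain q where q: "\<And>x. f x = poly q (g x)"
    using polynomial_in_singleton_eq_poly[OF assms(1)] by blast
  have "q \<noteq> 0"
    using assms(3) q[of x\<^sub>0] by auto
  then have "finite (g -` {z. poly q z = 0})"
    by (rule finite_vimageI[OF poly_roots_finite assms(2)])
  then show ?thesis
    by (simp add: q vimage_def)
qed

lemma polynomial_in_coeff:
  assumes "polynomial_in (insert (\<lambda>x. [:0, 1:]) ((\<lambda>b x. [:b x:]) ` B)) P"
  shows "polynomial_in B (\<lambda>x. coeff (P x) k)"
  using assms
proof (induction arbitrary: k)
  case (generator b)
  then show ?case
    by (cases k) (auto intro: polynomial_in.intros)
next
  case (const c)
  then show ?case by (rule polynomial_in.const)
next
  case (add f g)
  then show ?case by (simp add: polynomial_in.add)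
next
  case (mult f g)
  then show ?case
    unfolding coeff_mult by (intro polynomial_in_sum polynomial_in.mult) auto
qed

definition polynomial_matrix_in :: "('a \<Rightarrow> 'b::comm_ring_1) set \<Rightarrow> ('a \<Rightarrow> 'b^'n^'m) \<Rightarrow> bool" where
  "polynomial_matrix_in B F \<longleftrightarrow> (\<forall>i j. polynomial_in B (\<lambda>x. F x $ i $ j))"

definition matrix_entries :: "('a^'n^'m \<Rightarrow> 'a) set" where
  "matrix_entries = {(\<lambda>A. A $ i $ j) | i j. True}"

lemma polynomial_matrix_in_entries: "polynomial_matrix_in matrix_entries (\<lambda>A. A)"
  unfolding polynomial_matrix_in_def matrix_entries_def by (auto intro: polynomial_in.generator)

lemma polynomial_matrix_in_mat:
  assumes "polynomial_in B c"
  shows "polynomial_matrix_in B (\<lambda>x. mat (c x) :: 'b::comm_ring_1^'n^'n)"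
proof -
  have "polynomial_in B (\<lambda>x. if i = j then c x else 0)" for i j :: 'n
    using assms by (cases "i = j") (simp_all add: polynomial_in.const)
  then show ?thesis
    by (simp add: polynomial_matrix_in_def mat_def)
qed

lemma polynomial_matrix_in_diff:
  "polynomial_matrix_in B F \<Longrightarrow> polynomial_matrix_in B G \<Longrightarrow> polynomial_matrix_in B (\<lambda>x. F x - G x)"
  unfolding polynomial_matrix_in_def by (auto intro: polynomial_in_diff)

lemma polynomial_matrix_in_mult:
  "polynomial_matrix_in B F \<Longrightarrow> polynomial_matrix_in B G \<Longrightarrow> polynomial_matrix_in B (\<lambda>x. F x ** G x)"
  unfolding polynomial_matrix_in_def matrix_matrix_mult_def
  by (auto intro!: polynomial_in_sum polynomial_in.mult)

lemma polynomial_matrix_in_sum: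
  "finite S \<Longrightarrow> (\<And>i. i \<in> S \<Longrightarrow> polynomial_matrix_in B (F i)) \<Longrightarrow>
    polynomial_matrix_in B (\<lambda>x. \<Sum>i\<in>S. F i x)"
  unfolding polynomial_matrix_in_def by (auto intro!: polynomial_in_sum)

lemma polynomial_in_det:
  "polynomial_matrix_in B F \<Longrightarrow> polynomial_in B (\<lambda>x. det (F x))"
  unfolding polynomial_matrix_in_def det_def
  by (intro polynomial_in_sum polynomial_in.mult polynomial_in.const polynomial_in_prod) auto

lemma continuous_on_polynomial_in_entries:
  fixes D :: "'a::{comm_ring_1, real_normed_algebra}^'n^'m \<Rightarrow> 'a"
  assumes "polynomial_in matrix_entries D"
  shows "continuous_on UNIV D"
  by (rule continuous_on_polynomial_in[OF assms])
    (auto simp: matrix_entries_def intro!: continuous_on_component continuous_on_id)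

section \<open>Polynomials evaluated at a matrix\<close>

lemma matrix_add_rdistrib: "(B + C) ** A = B ** A + C ** A"
  by (vector matrix_matrix_mult_def sum.distrib[symmetric] field_simps)

lemma matrix_mult_sum: "finite S \<Longrightarrow> A ** (\<Sum>k\<in>S. F k) = (\<Sum>k\<in>S. A ** F k)"
  by (induction S rule: finite_induct) (auto simp: matrix_add_ldistrib)

lemma mat_matrix_mult: "mat a ** M = (\<chi> i j. a * M $ i $ j)"
  unfolding matrix_matrix_mult_def mat_def
  by (auto simp: if_distrib if_distribR sum.delta'[OF finite] cong: if_cong)

lemma matrix_mult_mat: "M ** mat a = (\<chi> i j. M $ i $ j * a)"
  unfolding matrix_matrix_mult_def mat_def
  by (auto simp: if_distrib if_distribR sum.delta'[OF finite] cong: if_cong)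

lemma mat_matrix_mult_left_commute:
  "mat a ** (A ** B) = A ** (mat a ** B :: 'a::comm_semiring_1^'n^'n)"
proof -
  have "mat a ** A = A ** mat a"
    by (simp add: mat_matrix_mult matrix_mult_mat mult.commute)
  then show ?thesis
    by (metis matrix_mul_assoc)
qed

lemma mat_add: "mat a + mat b = (mat (a + b) :: 'a::monoid_add^'n^'n)"
  by (simp add: mat_def vec_eq_iff)

lemma mat_mult_mat: "mat a ** mat b = (mat (a * b) :: 'a::semiring_1^'n^'n)"
  unfolding mat_matrix_mult by (simp add: mat_def vec_eq_iff)

lemma mat_matrix_vector_mult: "mat a *v v = a *s v"
  unfolding matrix_vector_mult_def mat_def vector_scalar_mult_def
  by (auto simp: if_distrib if_distribR sum.delta'[OF finite] cong: if_cong)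

fun matrix_power :: "'a::semiring_1^'n^'n \<Rightarrow> nat \<Rightarrow> 'a^'n^'n" where
  "matrix_power A 0 = mat 1"
| "matrix_power A (Suc k) = A ** matrix_power A k"

definition mat_poly :: "'a::comm_ring_1 poly \<Rightarrow> 'a^'n^'n \<Rightarrow> 'a^'n^'n" where
  "mat_poly q A = (\<Sum>k\<le>degree q. mat (coeff q k) ** matrix_power A k)"

lemma polynomial_matrix_in_matrix_power:
  "polynomial_matrix_in B F \<Longrightarrow> polynomial_matrix_in B (\<lambda>x. matrix_power (F x) k)"
  by (induction k) (auto intro: polynomial_matrix_in_mult polynomial_matrix_in_mat polynomial_in.const)

lemma mat_poly_eq_sum:
  assumes "degree q \<le> N"
  shows "mat_poly q A = (\<Sum>k\<le>N. mat (coeff q k) ** matrix_power A k)"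
  unfolding mat_poly_def using assms
  by (intro sum.mono_neutral_left) (auto simp: coeff_eq_0)

lemma polynomial_matrix_in_mat_poly:
  assumes "\<And>k. polynomial_in B (\<lambda>x. coeff (P x) k)" "\<And>x. degree (P x) \<le> N"
    and "polynomial_matrix_in B F"
  shows "polynomial_matrix_in B (\<lambda>x. mat_poly (P x) (F x))"
  unfolding mat_poly_eq_sum[OF assms(2)] using assms(1,3)
  by (intro polynomial_matrix_in_sum polynomial_matrix_in_mult polynomial_matrix_in_mat
      polynomial_matrix_in_matrix_power) auto

lemma mat_poly_0 [simp]: "mat_poly 0 A = 0"
  by (simp add: mat_poly_def)

lemma mat_poly_add: "mat_poly (p + q) A = mat_poly p A + mat_poly q A"
proof -
  let ?N = "max (degree p) (degree q)"
  have "degree (p + q) \<le> ?N"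
    by (rule degree_add_le) auto
  then show ?thesis
    by (simp add: mat_poly_eq_sum[of _ ?N] sum.distrib[symmetric] matrix_add_rdistrib
        mat_add[symmetric])
qed

lemma mat_poly_smult: "mat_poly (smult a q) A = mat a ** mat_poly q A"
proof -
  have "mat_poly (smult a q) A = (\<Sum>k\<le>degree q. mat (a * coeff q k) ** matrix_power A k)"
    by (simp add: mat_poly_eq_sum[OF degree_smult_le])
  also have "\<dots> = mat a ** mat_poly q A"
    by (simp add: mat_poly_def matrix_mult_sum matrix_mul_assoc mat_mult_mat)
  finally show ?thesis .
qed

lemma mat_poly_pCons: "mat_poly (pCons a p) A = mat a + A ** mat_poly p A"
proof -
  have "mat_poly (pCons a p) A = (\<Sum>k\<le>Suc (degree p). mat (coeff (pCons a p) k) ** matrix_power A k)"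
    by (rule mat_poly_eq_sum) simp
  also have "\<dots> = mat a + (\<Sum>k\<le>degree p. mat (coeff p k) ** (A ** matrix_power A k))"
    by (subst sum.atMost_Suc_shift) simp
  also have "(\<Sum>k\<le>degree p. mat (coeff p k) ** (A ** matrix_power A k)) = A ** mat_poly p A"
    by (simp add: mat_poly_def matrix_mult_sum mat_matrix_mult_left_commute)
  finally show ?thesis .
qed

lemma mat_poly_mult: "mat_poly (p * q) A = mat_poly p A ** mat_poly q A"
proof (induction p)
  case 0
  then show ?case by simp
next
  case (pCons a p)
  have "mat_poly (pCons a p * q) A = mat_poly (smult a q) A + mat_poly (pCons 0 (p * q)) A"
    by (simp add: mat_poly_add)
  also have "\<dots> = mat a ** mat_poly q A + A ** (mat_poly p A ** mat_poly q A)"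
    by (simp add: mat_poly_smult mat_poly_pCons pCons.IH)
  also have "\<dots> = (mat a + A ** mat_poly p A) ** mat_poly q A"
    by (simp add: matrix_add_rdistrib matrix_mul_assoc)
  finally show ?case
    by (simp add: mat_poly_pCons)
qed

lemma mat_poly_eigenvector:
  fixes A :: "'a::field^'n^'n"
  assumes "A *v v = c *s v"
  shows "mat_poly q A *v v = poly q c *s v"
proof (induction q)
  case 0
  then show ?case by (simp add: vec_eq_iff)
next
  case (pCons a p)
  have "mat_poly (pCons a p) A *v v = a *s v + A *v (poly p c *s v)"
    by (simp add: mat_poly_pCons matrix_vector_mult_add_rdistrib mat_matrix_vector_mult
        matrix_vector_mul_assoc[symmetric] pCons.IH)
  also have "\<dots> = (a + c * poly p c) *s v"
    using assms by (simp add: vector_scalar_commute vec_eq_iff algebra_simps)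
  finally show ?case by simp
qed

lemma det_eq_0_iff_kernel:
  fixes M :: "'a::field^'n^'n"
  shows "det M = 0 \<longleftrightarrow> (\<exists>v. v \<noteq> 0 \<and> M *v v = 0)"
proof -
  have "det M \<noteq> 0 \<longleftrightarrow> (\<forall>v. M *v v = 0 \<longrightarrow> v = 0)"
    using invertible_det_nz[of M] invertible_left_inverse[of M] matrix_left_invertible_ker[of M]
    by simp
  then show ?thesis by blast
qed

lemma det_mat_minus_eq_0_iff:
  fixes A :: "'a::field^'n^'n"
  shows "det (mat c - A) = 0 \<longleftrightarrow> (\<exists>v. v \<noteq> 0 \<and> A *v v = c *s v)"
proof -
  have "(mat c - A) *v v = 0 \<longleftrightarrow> A *v v = c *s v" for v
    by (auto simp: matrix_vector_mult_diff_rdistrib mat_matrix_vector_mult)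
  then show ?thesis
    by (simp add: det_eq_0_iff_kernel)
qed

lemma mat_poly_const: "mat_poly [:a:] A = mat a"
  using mat_poly_pCons[of a 0 A] by simp

lemma mat_poly_linear: "mat_poly [:c, -1:] A = mat c - A"
  by (simp add: mat_poly_pCons matrix_mult_mat) (simp add: mat_def vec_eq_iff)

lemma det_mat: "det (mat a :: 'a::comm_ring_1^'n^'n) = a ^ CARD('n)"
  by (simp add: det_diagonal mat_def)

lemma det_mat_poly_nonzero_iff:
  fixes A :: "'a::alg_closed_field^'n^'n"
  assumes "q \<noteq> 0"
  shows "det (mat_poly q A) \<noteq> 0 \<longleftrightarrow> (\<forall>c. poly q c = 0 \<longrightarrow> det (mat c - A) \<noteq> 0)"
proof
  assume det: "det (mat_poly q A) \<noteq> 0"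
  show "\<forall>c. poly q c = 0 \<longrightarrow> det (mat c - A) \<noteq> 0"
  proof (intro allI impI notI)
    fix c assume root: "poly q c = 0" and "det (mat c - A) = 0"
    then obtain v where "v \<noteq> 0" "A *v v = c *s v"
      by (auto simp: det_mat_minus_eq_0_iff)
    then have "mat_poly q A *v v = 0"
      using root by (simp add: mat_poly_eigenvector[of A v c q])
    with \<open>v \<noteq> 0\<close> det show False
      by (auto simp: det_eq_0_iff_kernel)
  qed
next
  show "\<forall>c. poly q c = 0 \<longrightarrow> det (mat c - A) \<noteq> 0 \<Longrightarrow> det (mat_poly q A) \<noteq> 0"
    using assms
  proof (induction "degree q" arbitrary: q rule: less_induct)
    case less
    show ?case
    proof (cases "degree q = 0")
      case True
      then obtain a where "q = [:a:]"
        by (rule degree_eq_zeroE)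
      with less.prems(2) show ?thesis
        by (simp add: mat_poly_const det_mat)
    next
      case False
      then obtain m where root: "poly q m = 0"
        using alg_closed_imp_poly_has_root by blast
      then have "- [:m, -1:] dvd q"
        by (simp add: poly_eq_0_iff_dvd)
      then obtain k where "q = - [:m, -1:] * k"
        by (rule dvdE)
      then obtain r where q: "q = [:m, -1:] * r"
        by (metis mult_minus_left mult_minus_right)
      with less.prems(2) have "r \<noteq> 0"
        by auto
      then have "degree r < degree q"
        unfolding q by (subst degree_mult_eq) auto
      moreover have "\<forall>c. poly r c = 0 \<longrightarrow> det (mat c - A) \<noteq> 0"
        using less.prems(1) by (simp add: q)
      ultimately have "det (mat_poly r A) \<noteq> 0"
        using less.hyps \<open>r \<noteq> 0\<close> by blast
      moreover have "det (mat_poly [:m, -1:] A) \<noteq> 0"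
        using less.prems(1) root by (simp add: mat_poly_linear)
      ultimately show ?thesis
        unfolding q mat_poly_mult det_mul by simp
    qed
  qed
qed

section \<open>The characteristic polynomial\<close>

definition charmat :: "'a::comm_ring_1^'n^'n \<Rightarrow> 'a poly^'n^'n" where
  "charmat A = mat [:0, 1:] - (\<chi> i j. [:A $ i $ j:])"

definition charpoly :: "'a::comm_ring_1^'n^'n \<Rightarrow> 'a poly" where
  "charpoly A = det (charmat A)"

lemma charmat_entry: "charmat A $ i $ j = (if i = j then [:- A $ i $ j, 1:] else [:- A $ i $ j:])"
  by (simp add: charmat_def mat_def)

lemma poly_charmat_entry: "poly (charmat A $ i $ j) c = (mat c - A) $ i $ j"
  by (simp add: charmat_def mat_def)

lemma poly_charpoly: "poly (charpoly A) c = det (mat c - A)"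
  unfolding charpoly_def det_def poly_sum poly_mult poly_of_int poly_prod poly_charmat_entry ..

lemma
  fixes A :: "'a::idom^'n^'n"
  shows degree_charpoly: "degree (charpoly A) = CARD('n)"
    and lead_coeff_charpoly: "lead_coeff (charpoly A) = 1"
proof -
  define T where "T p = of_int (sign p) * (\<Prod>i\<in>UNIV. charmat A $ i $ p i)" for p
  have split: "charpoly A = T id + (\<Sum>p\<in>{p. p permutes UNIV} - {id}. T p)"
    unfolding charpoly_def det_def T_def by (subst sum.remove[of _ id]) (auto simp: permutes_id)
  have T_id: "T id = (\<Prod>i\<in>UNIV. [:- A $ i $ i, 1:])"
    by (simp add: T_def sign_id charmat_entry)
  have degree_T_id: "degree (T id) = CARD('n)"
    by (simp add: T_id degree_prod_sum_eq)
  have lead_coeff_T_id: "lead_coeff (T id) = 1"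
    by (simp add: T_id lead_coeff_prod)
  have "degree (T p) < CARD('n)" if non_id: "p \<noteq> id" for p
  proof -
    obtain i\<^sub>0 where "p i\<^sub>0 \<noteq> i\<^sub>0"
      using non_id by (metis eq_id_iff)
    have "degree (T p) \<le> degree (\<Prod>i\<in>UNIV. charmat A $ i $ p i)"
      using degree_mult_le[of "of_int (sign p)" "\<Prod>i\<in>UNIV. charmat A $ i $ p i"] by (simp add: T_def)
    also have "\<dots> \<le> (\<Sum>i\<in>UNIV. degree (charmat A $ i $ p i))"
      using degree_prod_sum_le[of UNIV "\<lambda>i. charmat A $ i $ p i"] by (simp add: o_def)
    also have "\<dots> < (\<Sum>i\<in>(UNIV::'n set). 1)"
      using \<open>p i\<^sub>0 \<noteq> i\<^sub>0\<close> by (intro sum_strict_mono_ex1) (auto simp: charmat_entry, metis)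
    finally show ?thesis by simp
  qed
  then have less: "degree (\<Sum>p\<in>{p. p permutes UNIV} - {id}. T p) < CARD('n)"
    by (intro degree_sum_less) auto
  then show degree: "degree (charpoly A) = CARD('n)"
    unfolding split by (simp add: degree_add_eq_left degree_T_id)
  show "lead_coeff (charpoly A) = 1"
    using less lead_coeff_T_id unfolding degree by (simp add: split degree_T_id coeff_eq_0)
qed

lemma polynomial_in_coeff_charpoly:
  "polynomial_in matrix_entries (\<lambda>A::'a::comm_ring_1^'n^'n. coeff (charpoly A) k)"
proof -
  let ?B = "insert (\<lambda>A. [:0, 1:]) ((\<lambda>b A. [:b A:]) ` (matrix_entries :: ('a^'n^'n \<Rightarrow> 'a) set))"
  have "polynomial_in ?B (\<lambda>A. [:A $ i $ j:])" for i j
    by (rule polynomial_in.generator, rule insertI2, rule image_eqI[where x = "\<lambda>A. A $ i $ j"])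
      (auto simp: matrix_entries_def)
  then have "polynomial_matrix_in ?B (\<lambda>A. \<chi> i j. [:A $ i $ j:])"
    by (simp add: polynomial_matrix_in_def)
  then have "polynomial_matrix_in ?B charmat"
    unfolding charmat_def[abs_def]
    by (intro polynomial_matrix_in_diff polynomial_matrix_in_mat polynomial_in.const)
  then have "polynomial_in ?B charpoly"
    unfolding charpoly_def[abs_def] by (rule polynomial_in_det)
  then show ?thesis
    by (rule polynomial_in_coeff)
qed

lemma mat_eigenvalues_eq_roots_charpoly: "mat_eigenvalues A = {c. poly (charpoly A) c = 0}"
  by (simp add: set_eq_iff mat_eigenvalues_def det_mat_minus_eq_0_iff poly_charpoly)

lemma card_roots_eq_degree_iff_rsquarefree:
  fixes p :: "complex poly"
  assumes "p \<noteq> 0"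
  shows "card {c. poly p c = 0} = degree p \<longleftrightarrow> rsquarefree p"
proof -
  let ?R = "{c. poly p c = 0}"
  have "degree p = (\<Sum>c\<in>?R. order c p)"
    using size_proots_complex[of p] assms by (simp add: size_multiset_overloaded_eq)
  also have "\<dots> = (\<Sum>c\<in>?R. 1 + (order c p - 1))"
    using assms by (intro sum.cong) (auto simp: order_root)
  also have "\<dots> = card ?R + (\<Sum>c\<in>?R. order c p - 1)"
    unfolding sum.distrib by simp
  finally have "card ?R = degree p \<longleftrightarrow> (\<forall>c\<in>?R. order c p - 1 = 0)"
    using poly_roots_finite[OF assms] by simp
  also have "\<dots> \<longleftrightarrow> (\<forall>c. order c p = 0 \<or> order c p = 1)"
    using assms by (auto simp: order_root le_Suc_eq, metis neq0_conv)
  also have "\<dots> \<longleftrightarrow> rsquarefree p"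
    using assms by (simp add: rsquarefree_def)
  finally show ?thesis .
qed

lemma has_n_distinct_eigenvalues_iff_rsquarefree:
  fixes A :: "complex^'n^'n"
  shows "has_n_distinct_eigenvalues A \<longleftrightarrow> rsquarefree (charpoly A)"
proof -
  have "charpoly A \<noteq> 0"
    using lead_coeff_charpoly[of A] by auto
  then show ?thesis
    unfolding has_n_distinct_eigenvalues_def mat_eigenvalues_eq_roots_charpoly
      degree_charpoly[of A, symmetric]
    by (rule card_roots_eq_degree_iff_rsquarefree)
qed

text \<open>\<open>det \<chi>\<^sub>A'(A)\<close> is the product of \<open>\<chi>\<^sub>A'(\<lambda>)\<close> over the eigenvalues \<open>\<lambda>\<close> of \<open>A\<close> counted with
  multiplicity, i.e. up to sign the discriminant of \<open>\<chi>\<^sub>A\<close>.\<close>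
lemma det_mat_poly_pderiv_charpoly_nonzero_iff:
  fixes A :: "complex^'n^'n"
  shows "det (mat_poly (pderiv (charpoly A)) A) \<noteq> 0 \<longleftrightarrow> has_n_distinct_eigenvalues A"
proof -
  have "pderiv (charpoly A) \<noteq> 0"
    by (simp add: pderiv_eq_0_iff degree_charpoly)
  then show ?thesis
    by (auto simp: det_mat_poly_nonzero_iff has_n_distinct_eigenvalues_iff_rsquarefree
        rsquarefree_roots poly_charpoly[symmetric])
qed

lemma polynomial_in_det_mat_poly_pderiv_charpoly:
  "polynomial_in matrix_entries
    (\<lambda>A::'a::{idom, ring_char_0}^'n^'n. det (mat_poly (pderiv (charpoly A)) A))"
proof -
  have "polynomial_in matrix_entries (\<lambda>A::'a^'n^'n. coeff (pderiv (charpoly A)) k)" for k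
    unfolding coeff_pderiv
    by (intro polynomial_in.mult polynomial_in.const polynomial_in_coeff_charpoly)
  moreover have "degree (pderiv (charpoly A)) \<le> CARD('n)" for A :: "'a^'n^'n"
    by (simp add: degree_pderiv degree_charpoly)
  ultimately show ?thesis
    by (intro polynomial_in_det polynomial_matrix_in_mat_poly polynomial_matrix_in_entries)
qed

definition simple_nonsingular_det :: "complex^'n^'n \<Rightarrow> complex" where
  "simple_nonsingular_det A = det A * det (mat_poly (pderiv (charpoly A)) A)"

lemma simple_nonsingular_det_nonzero_iff:
  "simple_nonsingular_det A \<noteq> 0 \<longleftrightarrow> invertible A \<and> has_n_distinct_eigenvalues A"
  by (simp add: simple_nonsingular_det_def invertible_det_nz det_mat_poly_pderiv_charpoly_nonzero_iff)

lemma polynomial_in_simple_nonsingular_det: "polynomial_in matrix_entries simple_nonsingular_det"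
  unfolding simple_nonsingular_det_def[abs_def]
  by (intro polynomial_in.mult polynomial_in_det polynomial_matrix_in_entries
      polynomial_in_det_mat_poly_pderiv_charpoly)

section \<open>Polynomial paths\<close>

lemma matpoly_entry: "matpoly C k t $ i $ j = (\<Sum>l\<le>k. complex_of_real t ^ l * C l $ i $ j)"
proof -
  have "matpoly C k t $ i $ j = (\<Sum>l\<le>k. t ^ l *\<^sub>R C l $ i $ j)"
    by (simp add: matpoly_def)
  then show ?thesis
    by (simp add: scaleR_conv_of_real)
qed

lemma polynomial_in_matpoly:
  fixes D :: "complex^'n^'n \<Rightarrow> complex"
  assumes "polynomial_in matrix_entries D"
  shows "polynomial_in {complex_of_real} (\<lambda>t. D (matpoly C k t))"
  using assms
proof (rule polynomial_in_compose)
  fix b :: "complex^'n^'n \<Rightarrow> complex"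
  assume "b \<in> matrix_entries"
  then obtain i j where b: "b = (\<lambda>A. A $ i $ j)"
    by (auto simp: matrix_entries_def)
  show "polynomial_in {complex_of_real} (\<lambda>t. b (matpoly C k t))"
    unfolding b matpoly_entry
    by (intro polynomial_in_sum polynomial_in.mult polynomial_in.const polynomial_in_power)
      (auto intro: polynomial_in.generator)
qed

lemma start_in_closure_avoiding_finite:
  fixes p :: "real \<Rightarrow> 'a::topological_space"
  assumes "continuous (at_right 0) p" "finite Z" "0 < b"
  shows "p 0 \<in> closure (p ` ({0<..b} - Z))"
proof (rule Lim_in_closed_set[where f = p and F = "at_right 0"])
  show "(p \<longlongrightarrow> p 0) (at_right 0)"
    using assms(1) by (simp add: continuous_within)
  have "\<forall>\<^sub>F t in at_right 0. t < b"
    unfolding eventually_at_right_field using assms(3) by blast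
  moreover have "\<forall>\<^sub>F t in at_right (0::real). 0 < t"
    by (rule eventually_at_right_less)
  moreover have "\<forall>\<^sub>F t in at_right (0::real). \<forall>z\<in>Z. t \<noteq> z"
    using assms(2) by (rule eventually_ball_finite) (auto intro!: eventually_neq_at_within)
  ultimately have "\<forall>\<^sub>F t in at_right 0. p t \<in> p ` ({0<..b} - Z)"
    by eventually_elim auto
  then show "\<forall>\<^sub>F t in at_right 0. p t \<in> closure (p ` ({0<..b} - Z))"
    by eventually_elim (rule closure_subset[THEN subsetD])
qed simp_all

lemma matpoly_start_in_closure_of_nonzero:
  fixes D :: "complex^'n^'n \<Rightarrow> complex"
  assumes "polynomial_in matrix_entries D" "D (matpoly C k 1) \<noteq> 0"
  shows "matpoly C k 0 \<in> closure (matpoly C k ` {t \<in> {0<..1}. D (matpoly C k t) \<noteq> 0})"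
proof -
  let ?Z = "{t. D (matpoly C k t) = 0}"
  have "finite ?Z"
    using polynomial_in_matpoly[OF assms(1)] inj_of_real assms(2)
    by (rule finite_zeros_polynomial_in_singleton)
  moreover have "continuous (at_right 0) (matpoly C k)"
    unfolding matpoly_def by (intro continuous_intros)
  ultimately have "matpoly C k 0 \<in> closure (matpoly C k ` ({0<..1} - ?Z))"
    by (intro start_in_closure_avoiding_finite) auto
  also have "{0<..1} - ?Z = {t \<in> {0<..1}. D (matpoly C k t) \<noteq> 0}"
    by auto
  finally show ?thesis .
qed


lemma closure_nonzero_imp_nonzero:
  fixes f :: "'a::topological_space \<Rightarrow> 'b::real_normed_vector"
  assumes "continuous_on UNIV f" "M \<in> closure S" "f M \<noteq> 0"
  obtains x where "x \<in> S" "f x \<noteq> 0"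
proof -
  have "open (f -` (- {0}))"
    using assms(1) by (intro open_vimage) auto
  moreover have "M \<in> f -` (- {0}) \<inter> closure S"
    using assms(2,3) by simp
  ultimately show ?thesis
    using that open_Int_closure_eq_empty by blast
qed

lemma polynomially_connected_subset_closure_nonzero:
  fixes D :: "complex^'n^'n \<Rightarrow> complex"
  assumes polyconn: "\<forall>A\<in>\<Gamma>. \<forall>B\<in>\<Gamma>. \<exists>C k.
              matpoly C k 0 = A \<and> matpoly C k 1 = B \<and> (\<forall>t\<in>{0..1}. matpoly C k t \<in> \<Gamma>)"
    and "polynomial_in matrix_entries D" "A\<^sub>0 \<in> \<Gamma>" "D A\<^sub>0 \<noteq> 0"
  shows "\<Gamma> \<subseteq> closure {A \<in> \<Gamma>. D A \<noteq> 0}"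
proof
  fix A assume "A \<in> \<Gamma>"
  then obtain C k where C: "matpoly C k 0 = A" "matpoly C k 1 = A\<^sub>0"
    "\<forall>t\<in>{0..1}. matpoly C k t \<in> \<Gamma>"
    using polyconn assms(3) by blast
  have "matpoly C k ` {t \<in> {0<..1}. D (matpoly C k t) \<noteq> 0} \<subseteq> {A \<in> \<Gamma>. D A \<noteq> 0}"
    using C(3) by auto
  then show "A \<in> closure {A \<in> \<Gamma>. D A \<noteq> 0}"
    using matpoly_start_in_closure_of_nonzero[OF assms(2), of C k] C(1,2) assms(4) closure_mono
    by blast
qed

theorem theorem3p7:
  fixes \<Gamma> :: "(complex^'n^'n) set"
  assumes nonempty: "\<Gamma> \<noteq> {}"
    and polyconn: "\<forall>A\<in>\<Gamma>. \<forall>B\<in>\<Gamma>. \<exists>(C :: nat \<Rightarrow> complex^'n^'n) k.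
              matpoly C k 0 = A \<and> matpoly C k 1 = B \<and> (\<forall>t\<in>{0..1}. matpoly C k t \<in> \<Gamma>)"
  shows "\<Gamma> \<subseteq> closure {A \<in> \<Gamma>. invertible A \<and> has_n_distinct_eigenvalues A}
         \<longleftrightarrow> (\<exists>M\<in>closure \<Gamma>. invertible M \<and> has_n_distinct_eigenvalues M)"
proof
  let ?G = "{A \<in> \<Gamma>. invertible A \<and> has_n_distinct_eigenvalues A}"
  assume "\<Gamma> \<subseteq> closure ?G"
  with nonempty have "?G \<noteq> {}"
    by (metis closure_empty subset_empty)
  then show "\<exists>M\<in>closure \<Gamma>. invertible M \<and> has_n_distinct_eigenvalues M"
    using closure_subset by blast
next
  assume "\<exists>M\<in>closure \<Gamma>. invertible M \<and> has_n_distinct_eigenvalues M"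
  then obtain M where "M \<in> closure \<Gamma>" "simple_nonsingular_det M \<noteq> 0"
    by (auto simp: simple_nonsingular_det_nonzero_iff)
  with continuous_on_polynomial_in_entries[OF polynomial_in_simple_nonsingular_det]
  obtain A\<^sub>0 where "A\<^sub>0 \<in> \<Gamma>" "simple_nonsingular_det A\<^sub>0 \<noteq> 0"
    by (rule closure_nonzero_imp_nonzero)
  with polyconn polynomial_in_simple_nonsingular_det
  have "\<Gamma> \<subseteq> closure {A \<in> \<Gamma>. simple_nonsingular_det A \<noteq> 0}"
    by (rule polynomially_connected_subset_closure_nonzero)
  then show "\<Gamma> \<subseteq> closure {A \<in> \<Gamma>. invertible A \<and> has_n_distinct_eigenvalues A}"
    by (simp add: simple_nonsingular_det_nonzero_iff)
qed

end
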